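(* Let $\mathcal G$ be a Petri game with one system player whose underlying net is finite and bounded. If Player~0 has a winning strategy in $\mathit{Graph}(\mathcal G)$, then Player~0 has a winning strategy in $\mathit{Graph}'(\mathcal G)$.
   Context: Petri nets. A Petri net is a tuple $\mathcal N=(\mathcal P,\mathcal T,\mathcal F,\mathit{In})$ where the set of places $\mathcal P$ and the set of transitions $\mathcal T$ are disjoint, the flow relation $\mathcal F$ is a multiset over $(\mathcal P\times\mathcal T)\cup(\mathcal T\times\mathcal P)$, and the initial marking $\mathit{In}$ is a finite multiset over $\mathcal P$. For a node $x$, the precondition ${}^\bullet x$ is the multiset with ${}^\bullet x(y)=\mathcal F(y,x)$ and the postcondition $x^\bullet$ is the multiset with $x^\bullet(y)=\mathcal F(x,y)$; every transition $t$ must satisfy $0<|{}^\bullet t|<\infty$ and $0<|t^\bullet|<\infty$. A marking is a finite multiset over $\mathcal P$. A transition $t$ is enabled in a marking $M$ if ${}^\bullet t\subseteq M$ (multiset inclusion); firing it yields $M'=M-{}^\bullet t+t^\bullet$, written $M\xrightarrow{t}M'$. A marking is reachable if it is obtained from $\mathit{In}$ by firing a finite sequence of transitions; $\mathcal R(\mathcal N)$ denotes the set of reachable markings. $\mathcal N$ is finite if $\mathcal P\cup\mathcal T$ is finite, $k$-bounded if $M(p)\le k$ for all $M\in\mathcal R(\mathcal N)$ and places $p$, bounded if $k$-bounded for some $k$. Multiset difference is truncated at $0$; $+$ is multiset sum. Petri games. A Petri game is $\mathcal G=(\mathcal P_S,\mathcal P_E,\mathcal T,\mathcal F,\mathit{In},\mathcal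 B)$ where $\mathcal P_S$ (system places) and $\mathcal P_E$ (environment places) are disjoint, $\mathcal N=(\mathcal P_S\cup\mathcal P_E,\mathcal T,\mathcal F,\mathit{In})$ is a finite Petri net (the underlying net) and $\mathcal B$ is a set of markings (bad markings). A transition $t$ is purely environmental if ${}^\bullet t\subseteq\mathcal P_E$, otherwise it is a system transition. $\mathcal G$ has one system player if every $M\in\mathcal R(\mathcal N)$ contains exactly one token on system places; that place is denoted $s_M$, and $s_M^\bullet$ is the set of transitions having $s_M$ in their precondition. Graph games. A graph game $(\mathcal V_0,\mathcal V_1,\mathcal I,\mathcal E,\mathcal X)$ has disjoint vertex sets $\mathcal V_0,\mathcal V_1$ (of Players 0 and 1), initial vertex $\mathcal I$, edge relation $\mathcal E$ and bad vertices $\mathcal X$. A play is a maximal (finite or infinite) sequence $v_0v_1\dots$ with $v_0=\mathcal I$ and $(v_i,v_{i+1})\in\mathcal E$; it is won by Player~0 if no $v_i\in\mathcal X$. A strategy for Player~0 is a vertex-labeled tree whose root is labeled $\mathcal I$, where a node labeled with a $\mathcal V_1$ vertex has one child for each successor vertex and a node labeled with a $\mathcal V_0$ vertex having a successor has exactly one child labeled with one successor; it is winning if all maximal paths are labeled with plays won by Player~0. The game $\mathit{Graph}(\mathcal G)$: $\mathcal V_0=\{(M,\top)\mid M\in\mathcal R(\mathcal N)\}$, $\mathcal V_1=\{(M,c)\mid M\in\mathcal R(\mathcal N),\,c\subseteq s_M^\bullet\}$, $\mathcal I=(\mathit{In},\top)$. Edges: (E1) $(M,\top)\to(M,c)$ for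 every $c\subseteq s_M^\bullet$; (E2) $(M,c)\to(M',c)$ whenever some purely environmental $\mathbf t$ satisfies $M\xrightarrow{\mathbf t}M'$; (E3) $(M,c)\to(M',\top)$ whenever some system transition $\mathbf t\in c$ satisfies $M\xrightarrow{\mathbf t}M'$. Bad vertices: all $(M,c)\in\mathcal V_1$ such that (X1) $M\in\mathcal B$; or (X2a) two distinct transitions of $c$ are enabled in $M$; or (X2b) some $\mathbf t\in c$ is enabled in $M$ and $0<{}^\bullet\mathbf t(p)<M(p)$ for some place $p$; or (X3) some transition is enabled in $M$, every transition enabled in $M$ is a system transition, and no transition enabled in $M$ lies in $c$. The game $\mathit{Graph}'(\mathcal G)$: $\mathcal V'_0=\{(M,\top,\{s_M\})\mid M\in\mathcal R(\mathcal N)\}$, $\mathcal V'_1=\{(M,c,R)\mid M\in\mathcal R(\mathcal N),\,c\subseteq s_M^\bullet,\,R$ a multiset with $s_M\in R\subseteq M\}$, $\mathcal I'=(\mathit{In},\top,\{s_{\mathit{In}}\})$. Edges: (E'1) $(M,\top,\{s_M\})\to(M,c,\{s_M\})$ for every $c\subseteq s_M^\bullet$; (E'2) $(M,c,R)\to(M',c,R')$ whenever some purely environmental $\mathbf t$ satisfies $M\xrightarrow{\mathbf t}M'$ and $R'=R-{}^\bullet\mathbf t+\{o\}$ for some place $o\in\mathbf t^\bullet$; (E'3) $(M,c,R)\to(M',\top,\{s_{M'}\})$ whenever some system transition $\mathbf t\in c$ satisfies $M\xrightarrow{\mathbf t}M'$ and $R\subseteq{}^\bullet\mathbf t$. Bad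 vertices: all $(M,c,R)\in\mathcal V'_1$ such that $(M,c)$ satisfies one of the conditions (X1), (X2a), (X2b), (X3) above. *)

theory Defs
  imports Main "HOL-Library.Multiset"
begin

text \<open>Places have type 'p, transitions type 't (so places and transitions are disjoint).\<close>

record ('p, 't) petri_game =
  PS   :: "'p set"
  PE   :: "'p set"
  Tr   :: "'t set"
  flow :: "('p \<times> 't + 't \<times> 'p) multiset"
  In   :: "'p multiset"
  Bad  :: "'p multiset set"

definition places :: "('p, 't) petri_game \<Rightarrow> 'p set" where
  "places G = PS G \<union> PE G"

definition pre :: "('p, 't) petri_game \<Rightarrow> 't \<Rightarrow> 'p multiset" where
  "pre G t = image_mset (\<lambda>x. case x of Inl (p, _) \<Rightarrow> p | Inr (_, p) \<Rightarrow> p)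
     (filter_mset (\<lambda>x. case x of Inl (_, t') \<Rightarrow> t' = t | Inr _ \<Rightarrow> False) (flow G))"

definition post :: "('p, 't) petri_game \<Rightarrow> 't \<Rightarrow> 'p multiset" where
  "post G t = image_mset (\<lambda>x. case x of Inl (p, _) \<Rightarrow> p | Inr (_, p) \<Rightarrow> p)
     (filter_mset (\<lambda>x. case x of Inl _ \<Rightarrow> False | Inr (t', _) \<Rightarrow> t' = t) (flow G))"

definition petri_game :: "('p, 't) petri_game \<Rightarrow> bool" where
  "petri_game G \<longleftrightarrow>
     PS G \<inter> PE G = {} \<and>
     (\<forall>x \<in> set_mset (flow G). case x of
        Inl (p, t) \<Rightarrow> p \<in> places G \<and> t \<in> Tr G
      | Inr (t, p) \<Rightarrow> t \<in> Tr G \<and> p \<in> places G) \<and>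
     set_mset (In G) \<subseteq> places G \<and>
     (\<forall>M \<in> Bad G. set_mset M \<subseteq> places G) \<and>
     (\<forall>t \<in> Tr G. 0 < size (pre G t) \<and> 0 < size (post G t)) \<and>
     finite (places G) \<and> finite (Tr G)"

definition enabled :: "('p, 't) petri_game \<Rightarrow> 't \<Rightarrow> 'p multiset \<Rightarrow> bool" where
  "enabled G t M \<longleftrightarrow> t \<in> Tr G \<and> pre G t \<subseteq># M"

definition fire :: "('p, 't) petri_game \<Rightarrow> 't \<Rightarrow> 'p multiset \<Rightarrow> 'p multiset" where
  "fire G t M = M - pre G t + post G t"

inductive_set reach :: "('p, 't) petri_game \<Rightarrow> 'p multiset set" for G where
  init: "In G \<in> reach G"
| step: "M \<in> reach G \<Longrightarrow> enabled G t M \<Longrightarrow> fire G t M \<in> reach G"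

definition bounded_net :: "('p, 't) petri_game \<Rightarrow> bool" where
  "bounded_net G \<longleftrightarrow> (\<exists>k::nat. \<forall>M \<in> reach G. \<forall>p. count M p \<le> k)"

definition purely_env :: "('p, 't) petri_game \<Rightarrow> 't \<Rightarrow> bool" where
  "purely_env G t \<longleftrightarrow> t \<in> Tr G \<and> set_mset (pre G t) \<subseteq> PE G"

definition system_trans :: "('p, 't) petri_game \<Rightarrow> 't \<Rightarrow> bool" where
  "system_trans G t \<longleftrightarrow> t \<in> Tr G \<and> \<not> set_mset (pre G t) \<subseteq> PE G"

definition one_system_player :: "('p, 't) petri_game \<Rightarrow> bool" where
  "one_system_player G \<longleftrightarrow> (\<forall>M \<in> reach G. size (filter_mset (\<lambda>p. p \<in> PS G) M) = 1)"

definition sysplace :: "('p, 't) petri_game \<Rightarrow> 'p multiset \<Rightarrow> 'p" where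
  "sysplace G M = (THE p. p \<in># M \<and> p \<in> PS G)"

definition sys_post :: "('p, 't) petri_game \<Rightarrow> 'p multiset \<Rightarrow> 't set" where
  "sys_post G M = {t \<in> Tr G. sysplace G M \<in># pre G t}"

definition bad_cond :: "('p, 't) petri_game \<Rightarrow> 'p multiset \<Rightarrow> 't set \<Rightarrow> bool" where
  "bad_cond G M c \<longleftrightarrow>
     M \<in> Bad G
   \<or> (\<exists>t1 \<in> c. \<exists>t2 \<in> c. t1 \<noteq> t2 \<and> enabled G t1 M \<and> enabled G t2 M)
   \<or> (\<exists>t \<in> c. enabled G t M \<and> (\<exists>p. 0 < count (pre G t) p \<and> count (pre G t) p < count M p))
   \<or> ((\<exists>t. enabled G t M) \<and> (\<forall>t. enabled G t M \<longrightarrow> system_trans G t)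
       \<and> \<not> (\<exists>t \<in> c. enabled G t M))"

record 'v graph_game =
  V0   :: "'v set"
  V1   :: "'v set"
  Init :: 'v
  Edg  :: "('v \<times> 'v) set"
  Xbad :: "'v set"

text \<open>A strategy for Player 0 is a vertex-labelled tree. Since the children of every node
  carry pairwise distinct labels, such a tree is represented by the prefix-closed set of
  label sequences of root-to-node paths (each node is the nonempty list of labels from the
  root to it).\<close>
definition is_strategy :: "'v graph_game \<Rightarrow> 'v list set \<Rightarrow> bool" where
  "is_strategy A S \<longleftrightarrow>
     [Init A] \<in> S \<and>
     (\<forall>xs \<in> S. xs \<noteq> [] \<and> hd xs = Init A) \<and>
     (\<forall>xs ys. xs @ ys \<in> S \<and> xs \<noteq> [] \<longrightarrow> xs \<in> S) \<and>
     (\<forall>xs v. xs @ [v] \<in> S \<and> xs \<noteq> [] \<longrightarrow> (last xs, v) \<in> Edg A) \<and>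
     (\<forall>xs \<in> S. last xs \<in> V1 A \<longrightarrow> (\<forall>v. (last xs, v) \<in> Edg A \<longrightarrow> xs @ [v] \<in> S)) \<and>
     (\<forall>xs \<in> S. last xs \<in> V0 A \<and> (\<exists>v. (last xs, v) \<in> Edg A) \<longrightarrow> (\<exists>!v. xs @ [v] \<in> S))"

definition winning_strategy :: "'v graph_game \<Rightarrow> 'v list set \<Rightarrow> bool" where
  "winning_strategy A S \<longleftrightarrow> is_strategy A S \<and>
     (\<forall>xs \<in> S. \<not> (\<exists>v. xs @ [v] \<in> S) \<longrightarrow> set xs \<inter> Xbad A = {}) \<and>
     (\<forall>f :: nat \<Rightarrow> 'v. (\<forall>n. map f [0..<Suc n] \<in> S) \<longrightarrow> (\<forall>n. f n \<notin> Xbad A))"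

definition player0_wins :: "'v graph_game \<Rightarrow> bool" where
  "player0_wins A \<longleftrightarrow> (\<exists>S. winning_strategy A S)"

text \<open>The label \<top> is encoded as None, a commitment set c as Some c.\<close>

definition gV0 :: "('p, 't) petri_game \<Rightarrow> ('p multiset \<times> 't set option) set" where
  "gV0 G = {(M, None) | M. M \<in> reach G}"

definition gV1 :: "('p, 't) petri_game \<Rightarrow> ('p multiset \<times> 't set option) set" where
  "gV1 G = {(M, Some c) | M c. M \<in> reach G \<and> c \<subseteq> sys_post G M}"

definition gE :: "('p, 't) petri_game \<Rightarrow> (('p multiset \<times> 't set option) \<times> ('p multiset \<times> 't set option)) set" where
  "gE G = {(u, v). u \<in> gV0 G \<union> gV1 G \<and> v \<in> gV0 G \<union> gV1 G \<and>
     ((\<exists>M c. u = (M, None) \<and> v = (M, Some c))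
    \<or> (\<exists>M c t. u = (M, Some c) \<and> v = (fire G t M, Some c) \<and> purely_env G t \<and> enabled G t M)
    \<or> (\<exists>M c t. u = (M, Some c) \<and> v = (fire G t M, None) \<and> system_trans G t \<and> t \<in> c \<and> enabled G t M))}"

definition Graph :: "('p, 't) petri_game \<Rightarrow> ('p multiset \<times> 't set option) graph_game" where
  "Graph G = \<lparr> V0 = gV0 G, V1 = gV1 G, Init = (In G, None), Edg = gE G,
     Xbad = {(M, Some c) | M c. (M, Some c) \<in> gV1 G \<and> bad_cond G M c} \<rparr>"

definition hV0 :: "('p, 't) petri_game \<Rightarrow> ('p multiset \<times> 't set option \<times> 'p multiset) set" where
  "hV0 G = {(M, None, {#sysplace G M#}) | M. M \<in> reach G}"

definition hV1 :: "('p, 't) petri_game \<Rightarrow> ('p multiset \<times> 't set option \<times> 'p multiset) set" where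
  "hV1 G = {(M, Some c, R) | M c R. M \<in> reach G \<and> c \<subseteq> sys_post G M \<and>
                                 sysplace G M \<in># R \<and> R \<subseteq># M}"

definition hE :: "('p, 't) petri_game \<Rightarrow>
    (('p multiset \<times> 't set option \<times> 'p multiset) \<times> ('p multiset \<times> 't set option \<times> 'p multiset)) set" where
  "hE G = {(u, v). u \<in> hV0 G \<union> hV1 G \<and> v \<in> hV0 G \<union> hV1 G \<and>
     ((\<exists>M c R. u = (M, None, R) \<and> v = (M, Some c, R))
    \<or> (\<exists>M c R t q. u = (M, Some c, R) \<and> v = (fire G t M, Some c, R - pre G t + {#q#})
          \<and> purely_env G t \<and> enabled G t M \<and> q \<in># post G t)
    \<or> (\<exists>M c R t. u = (M, Some c, R) \<and> v = (fire G t M, None, {#sysplace G (fire G t M)#})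
          \<and> system_trans G t \<and> t \<in> c \<and> enabled G t M \<and> R \<subseteq># pre G t))}"

definition Graph' :: "('p, 't) petri_game \<Rightarrow> ('p multiset \<times> 't set option \<times> 'p multiset) graph_game" where
  "Graph' G = \<lparr> V0 = hV0 G, V1 = hV1 G, Init = (In G, None, {#sysplace G (In G)#}), Edg = hE G,
     Xbad = {(M, Some c, R) | M c R. (M, Some c, R) \<in> hV1 G \<and> bad_cond G M c} \<rparr>"

end

theory Submission
  imports Defs
begin

text \<open>Forgetting the third component maps Graph'(G) onto Graph(G): vertices, edges, bad
  vertices and the initial vertex are preserved, and a Player 0 vertex (M, \<top>, {s_M}) of
  Graph'(G) has exactly one successor (M, c, {s_M}) above each successor (M, c) of (M, \<top>).
  Hence the Graph'(G)-paths whose projection lies in a winning strategy for Graph(G)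
  form a winning strategy for Graph'(G).\<close>

lemma
  assumes "is_strategy A S"
  shows is_strategy_root: "[Init A] \<in> S"
    and is_strategy_nonempty: "xs \<in> S \<Longrightarrow> xs \<noteq> []"
    and is_strategy_prefix: "xs @ ys \<in> S \<Longrightarrow> xs \<noteq> [] \<Longrightarrow> xs \<in> S"
    and is_strategy_edge: "xs @ [v] \<in> S \<Longrightarrow> xs \<noteq> [] \<Longrightarrow> (last xs, v) \<in> Edg A"
    and is_strategy_V1: "xs \<in> S \<Longrightarrow> last xs \<in> V1 A \<Longrightarrow> (last xs, v) \<in> Edg A \<Longrightarrow> xs @ [v] \<in> S"
    and is_strategy_V0: "xs \<in> S \<Longrightarrow> last xs \<in> V0 A \<Longrightarrow> (last xs, v) \<in> Edg A \<Longrightarrow> \<exists>!v. xs @ [v] \<in> S"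
  using assms unfolding is_strategy_def by blast+

lemma winning_strategy_node_safe:
  assumes W: "winning_strategy A S" and xs: "xs \<in> S"
  shows "set xs \<inter> Xbad A = {}"
proof -
  have St: "is_strategy A S"
    using W unfolding winning_strategy_def by blast
  note pc = is_strategy_prefix[OF St] and ne = is_strategy_nonempty[OF St]
  have leaf: "\<And>xs. xs \<in> S \<Longrightarrow> \<not> (\<exists>v. xs @ [v] \<in> S) \<Longrightarrow> set xs \<inter> Xbad A = {}"
    using W unfolding winning_strategy_def by blast
  have inf: "\<And>f n. \<forall>n. map f [0..<Suc n] \<in> S \<Longrightarrow> f n \<notin> Xbad A"
    using W unfolding winning_strategy_def by blast
  \<comment> \<open>Extend xs to a maximal path by always choosing some child.\<close>
  define nxt where "nxt ys = (if \<exists>v. ys @ [v] \<in> S then ys @ [SOME v. ys @ [v] \<in> S] else ys)" for ys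
  define g where "g n = (nxt ^^ n) xs" for n
  have g_Suc: "g (Suc n) = nxt (g n)" for n by (simp add: g_def)
  have gS: "g n \<in> S" for n
  proof (induction n)
    case (Suc n)
    then show ?case by (auto simp: g_Suc nxt_def intro: someI_ex)
  qed (simp add: g_def xs)
  have g_prefix: "m \<le> n \<Longrightarrow> \<exists>zs. g n = g m @ zs" for m n
  proof (induction n rule: dec_induct)
    case (step n)
    then show ?case by (auto simp: g_Suc nxt_def)
  qed simp
  show ?thesis
  proof (cases "\<exists>n. \<not> (\<exists>v. g n @ [v] \<in> S)")
    case True
    then obtain n where n: "\<not> (\<exists>v. g n @ [v] \<in> S)" by blast
    from g_prefix[of 0 n] obtain zs where "g n = xs @ zs" by (auto simp: g_def)
    with leaf[OF gS n] show ?thesis by auto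
  next
    case False
    then have len: "length (g n) = length xs + n" for n
      by (induction n) (auto simp: g_Suc nxt_def, simp add: g_def)
    define f where "f k = g k ! k" for k
    have f_nth: "k \<le> n \<Longrightarrow> f k = g n ! k" for k n
      using g_prefix[of k n] len[of k] ne[OF xs] by (auto simp: f_def nth_append)
    have "map f [0..<Suc n] = take (Suc n) (g n)" for n
    proof (rule nth_equalityI)
      show "length (map f [0..<Suc n]) = length (take (Suc n) (g n))"
        using len[of n] ne[OF xs] by (cases xs) auto
    qed (use f_nth[of _ n] in \<open>auto simp del: upt_Suc\<close>)
    moreover have "take (Suc n) (g n) \<in> S" for n
      using pc[of "take (Suc n) (g n)" "drop (Suc n) (g n)"] gS[of n] len[of n]
      by (cases "g n") auto
    ultimately have "f n \<notin> Xbad A" for n using inf by metis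
    moreover have "xs ! i = f i" if "i < length xs" for i
      using g_prefix[of 0 i] that by (auto simp: g_def f_def nth_append)
    ultimately show ?thesis by (auto simp: in_set_conv_nth)
  qed
qed

lemma winning_strategyI:
  assumes "is_strategy A S" and "\<And>xs. xs \<in> S \<Longrightarrow> set xs \<inter> Xbad A = {}"
  shows "winning_strategy A S"
  unfolding winning_strategy_def
proof (intro conjI allI impI ballI)
  fix f :: "nat \<Rightarrow> _" and n assume "\<forall>n. map f [0..<Suc n] \<in> S"
  then show "f n \<notin> Xbad A" using assms(2)[of "map f [0..<Suc n]"] by auto
qed (use assms in auto)

lemma player0_wins_pullback:
  fixes h :: "'b \<Rightarrow> 'a"
  assumes W: "winning_strategy A S"
    and init: "h (Init B) = Init A"
    and V0: "\<And>u. u \<in> V0 B \<Longrightarrow> h u \<in> V0 A"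
    and V1: "\<And>u. u \<in> V1 B \<Longrightarrow> h u \<in> V1 A"
    and edge: "\<And>u v. (u, v) \<in> Edg B \<Longrightarrow> (h u, h v) \<in> Edg A"
    and bad: "\<And>u. u \<in> Xbad B \<Longrightarrow> h u \<in> Xbad A"
    and lift: "\<And>u v w. u \<in> V0 B \<Longrightarrow> (u, v) \<in> Edg B \<Longrightarrow> (h u, w) \<in> Edg A \<Longrightarrow>
                 \<exists>v'. (u, v') \<in> Edg B \<and> h v' = w"
    and inj: "\<And>u. u \<in> V0 B \<Longrightarrow> inj_on h {v. (u, v) \<in> Edg B}"
  shows "player0_wins B"
proof -
  have St: "is_strategy A S"
    using W unfolding winning_strategy_def by blast
  note S_init = is_strategy_root[OF St] and S_prefix = is_strategy_prefix[OF St]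
    and S_edge = is_strategy_edge[OF St] and S_V1 = is_strategy_V1[OF St]
    and S_V0 = is_strategy_V0[OF St]
  define S' where "S' = {xs. xs \<noteq> [] \<and> hd xs = Init B
      \<and> successively (\<lambda>u v. (u, v) \<in> Edg B) xs \<and> map h xs \<in> S}"
  have S'_snoc: "xs @ [v] \<in> S' \<longleftrightarrow> xs \<in> S' \<and> (last xs, v) \<in> Edg B \<and> map h xs @ [h v] \<in> S"
    if "xs \<noteq> []" for xs v
    using that S_prefix[of "map h xs" "[h v]"]
    by (auto simp: S'_def successively_append_iff)
  have last_h: "xs \<noteq> [] \<Longrightarrow> last (map h xs) = h (last xs)" for xs
    by (simp add: last_map)
  have V0_step: "\<exists>!v. xs @ [v] \<in> S'"
    if xs: "xs \<in> S'" and u: "last xs \<in> V0 B" and v0: "(last xs, v0) \<in> Edg B" for xs v0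
  proof -
    have ne: "xs \<noteq> []" and xsS: "map h xs \<in> S" using xs by (auto simp: S'_def)
    obtain w where w: "map h xs @ [w] \<in> S" and w_unique: "\<And>w'. map h xs @ [w'] \<in> S \<Longrightarrow> w' = w"
      using S_V0[OF xsS, of "h v0"] V0[OF u] edge[OF v0] last_h[OF ne] by metis
    obtain v where v: "(last xs, v) \<in> Edg B" "h v = w"
      using lift[OF u v0] S_edge[OF w] last_h[OF ne] ne by force
    show ?thesis
    proof (rule ex1I)
      show "xs @ [v] \<in> S'" using S'_snoc[OF ne] xs v w by simp
    next
      fix v' assume "xs @ [v'] \<in> S'"
      then have "(last xs, v') \<in> Edg B" "h v' = h v"
        using S'_snoc[OF ne] w_unique v(2) by auto
      then show "v' = v" using inj[OF u] v(1) by (auto dest: inj_onD)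
    qed
  qed
  have "is_strategy B S'"
    unfolding is_strategy_def
  proof (intro conjI allI impI ballI)
    show "[Init B] \<in> S'" using S_init init by (simp add: S'_def)
  next
    fix xs ys assume "xs @ ys \<in> S' \<and> xs \<noteq> []"
    then show "xs \<in> S'" using S_prefix[of "map h xs" "map h ys"]
      by (auto simp: S'_def successively_append_iff)
  next
    fix xs v assume "xs @ [v] \<in> S' \<and> xs \<noteq> []"
    then show "(last xs, v) \<in> Edg B" using S'_snoc by blast
  next
    fix xs v assume xs: "xs \<in> S'" and "last xs \<in> V1 B" "(last xs, v) \<in> Edg B"
    moreover have "xs \<noteq> []" "map h xs \<in> S" using xs by (auto simp: S'_def)
    ultimately show "xs @ [v] \<in> S'"
      using S'_snoc S_V1[of "map h xs" "h v"] V1 edge last_h by metis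
  next
    fix xs assume "xs \<in> S'" "last xs \<in> V0 B \<and> (\<exists>v. (last xs, v) \<in> Edg B)"
    then show "\<exists>!v. xs @ [v] \<in> S'" using V0_step by blast
  qed (auto simp: S'_def)
  moreover have "set xs \<inter> Xbad B = {}" if "xs \<in> S'" for xs
    using winning_strategy_node_safe[OF W, of "map h xs"] that bad by (fastforce simp: S'_def)
  ultimately show ?thesis unfolding player0_wins_def by (blast intro: winning_strategyI)
qed

definition forget_tokens :: "'a \<times> 'b \<times> 'c \<Rightarrow> 'a \<times> 'b" where
  "forget_tokens u = (fst u, fst (snd u))"

lemma forget_tokens_hV0: "u \<in> hV0 G \<Longrightarrow> forget_tokens u \<in> gV0 G"
  by (auto simp: hV0_def gV0_def forget_tokens_def)

lemma forget_tokens_hV1: "u \<in> hV1 G \<Longrightarrow> forget_tokens u \<in> gV1 G"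
  by (auto simp: hV1_def gV1_def forget_tokens_def)

lemma forget_tokens_hE:
  assumes "(u, v) \<in> hE G"
  shows "(forget_tokens u, forget_tokens v) \<in> gE G"
proof -
  have "u \<in> hV0 G \<union> hV1 G" "v \<in> hV0 G \<union> hV1 G"
    using assms unfolding hE_def by simp_all
  then have "forget_tokens u \<in> gV0 G \<union> gV1 G" "forget_tokens v \<in> gV0 G \<union> gV1 G"
    using forget_tokens_hV0 forget_tokens_hV1 by blast+
  with assms show ?thesis
    unfolding hE_def gE_def forget_tokens_def by (auto 0 3)
qed

lemma forget_tokens_bad: "u \<in> Xbad (Graph' G) \<Longrightarrow> forget_tokens u \<in> Xbad (Graph G)"
  using forget_tokens_hV1[of u G] by (auto simp: Graph'_def Graph_def forget_tokens_def)

lemma hE_from_hV0: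
  assumes "((M, None, R), v) \<in> hE G"
  shows "\<exists>c. v = (M, Some c, R) \<and> v \<in> hV1 G"
  using assms unfolding hE_def by (auto simp: hV0_def)

lemma gE_from_gV0:
  assumes "((M, None), w) \<in> gE G"
  shows "\<exists>c. w = (M, Some c) \<and> w \<in> gV1 G"
  using assms unfolding gE_def by (auto simp: gV0_def)

lemma hE_choose:
  assumes "(M, None, R) \<in> hV0 G" and "(M, Some c, R) \<in> hV1 G"
  shows "((M, None, R), (M, Some c, R)) \<in> hE G"
  using assms unfolding hE_def by blast

lemma forget_tokens_lift_choice:
  assumes u: "u \<in> hV0 G" and v: "(u, v) \<in> hE G" and w: "(forget_tokens u, w) \<in> gE G"
  shows "\<exists>v'. (u, v') \<in> hE G \<and> forget_tokens v' = w"
proof -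
  obtain M where M: "u = (M, None, {#sysplace G M#})" "M \<in> reach G"
    using u by (auto simp: hV0_def)
  \<comment> \<open>The existing successor v witnesses that s_M is marked in M.\<close>
  have "sysplace G M \<in># M"
    using hE_from_hV0[OF v[unfolded M(1)]] by (auto simp: hV1_def)
  moreover have "((M, None), w) \<in> gE G"
    using w M(1) by (simp add: forget_tokens_def)
  then obtain c where c: "w = (M, Some c)" "(M, Some c) \<in> gV1 G"
    using gE_from_gV0 by blast
  ultimately have "(M, Some c, {#sysplace G M#}) \<in> hV1 G"
    using M(2) by (simp add: hV1_def gV1_def)
  then have "(u, (M, Some c, {#sysplace G M#})) \<in> hE G"
    using hE_choose u M(1) by metis
  then show ?thesis using c(1) by (auto simp: forget_tokens_def)
qed

lemma forget_tokens_inj_on_choices: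
  assumes "u \<in> hV0 G"
  shows "inj_on forget_tokens {v. (u, v) \<in> hE G}"
proof (rule inj_onI)
  obtain M R where u: "u = (M, None, R)" using assms by (auto simp: hV0_def)
  fix v v' assume "v \<in> {v. (u, v) \<in> hE G}" "v' \<in> {v. (u, v) \<in> hE G}"
    and eq: "forget_tokens v = forget_tokens v'"
  then obtain c c' where "v = (M, Some c, R)" "v' = (M, Some c', R)"
    using hE_from_hV0 u by (metis mem_Collect_eq)
  then show "v = v'" using eq by (simp add: forget_tokens_def)
qed

theorem theorem2:
  fixes G :: "('p, 't) petri_game"
  assumes "petri_game G"
    and "finite (places G)" and "finite (Tr G)"
    and "bounded_net G"
    and "one_system_player G"
    and "player0_wins (Graph G)"
  shows "player0_wins (Graph' G)"
proof -
  obtain S where "winning_strategy (Graph G) S"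
    using assms(6) by (auto simp: player0_wins_def)
  then show ?thesis
  proof (rule player0_wins_pullback[where h = forget_tokens, OF _ _ _ _ _ forget_tokens_bad])
    show "forget_tokens (Init (Graph' G)) = Init (Graph G)"
      by (simp add: Graph_def Graph'_def forget_tokens_def)
  qed (simp_all only: Graph_def Graph'_def graph_game.simps forget_tokens_hV0 forget_tokens_hV1
      forget_tokens_hE forget_tokens_inj_on_choices, metis forget_tokens_lift_choice)
qed

end
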